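(* For $n\ge0$, the expected total number $E_n$ of branches (i.e. of $r$-branches summed over all $r\ge0$) in a binary tree chosen uniformly at random among binary trees with $n$ inner nodes is \[ E_n=\frac{n+1}{\binom{2n}{n}}\sum_{k=1}^{n+1}\big(2-2^{-v_2(k)}\big)\,k\bigg[\binom{2n}{n+1-k}-2\binom{2n}{n-k}+\binom{2n}{n-1-k}\bigg], \] where $v_2(k)$ is the largest $\nu$ such that $2^\nu$ divides $k$, and binomial coefficients with negative lower index are $0$.
   Context: A binary tree is either a leaf $\square$ or an inner node with an ordered pair of subtrees (left, right) which are binary trees; its size is its number of inner nodes. The register function is defined by $\mathrm{Reg}(\square)=0$, and for a tree with subtrees $t_1,t_2$: $\mathrm{Reg}(t)=\max\{\mathrm{Reg}(t_1),\mathrm{Reg}(t_2)\}$ if these differ, and $\mathrm{Reg}(t_1)+1$ otherwise. Label every node (inner node or leaf) by the register function of the subtree rooted at it. An $r$-branch is a maximal chain of nodes labeled $r$, i.e. a connected component (with respect to parent–child edges) of the set of nodes labeled $r$. A branch is an $r$-branch for some $r\ge0$. *)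

theory Defs
  imports "HOL-Computational_Algebra.Computational_Algebra"
begin

datatype bt = Leaf | Node bt bt

fun inner :: "bt \<Rightarrow> nat" where
  "inner Leaf = 0"
| "inner (Node l r) = Suc (inner l + inner r)"

fun Reg :: "bt \<Rightarrow> nat" where
  "Reg Leaf = 0"
| "Reg (Node l r) = (if Reg l \<noteq> Reg r then max (Reg l) (Reg r) else Reg l + 1)"

fun pos :: "bt \<Rightarrow> bool list set" where
  "pos Leaf = {[]}"
| "pos (Node l r) = insert [] (Cons False ` pos l \<union> Cons True ` pos r)"

fun subt :: "bt \<Rightarrow> bool list \<Rightarrow> bt" where
  "subt t [] = t"
| "subt (Node l r) (False # p) = subt l p"
| "subt (Node l r) (True # p) = subt r p"
| "subt Leaf (_ # p) = Leaf"

definition lab :: "bt \<Rightarrow> bool list \<Rightarrow> nat" where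
  "lab t p = Reg (subt t p)"

definition labelled :: "bt \<Rightarrow> nat \<Rightarrow> bool list set" where
  "labelled t r = {p \<in> pos t. lab t p = r}"

definition redge :: "bt \<Rightarrow> nat \<Rightarrow> (bool list \<times> bool list) set" where
  "redge t r = {(p, q). p \<in> labelled t r \<and> q \<in> labelled t r \<and>
                  ((\<exists>b. q = p @ [b]) \<or> (\<exists>b. p = q @ [b]))}"

definition rbranches :: "bt \<Rightarrow> nat \<Rightarrow> bool list set set" where
  "rbranches t r = labelled t r // ((redge t r)\<^sup>*)"

definition branches :: "bt \<Rightarrow> bool list set set" where
  "branches t = (\<Union>r. rbranches t r)"

definition binomz :: "nat \<Rightarrow> int \<Rightarrow> nat" where
  "binomz n k = (if k < 0 then 0 else n choose nat k)"

definition E :: "nat \<Rightarrow> real" where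
  "E n = (\<Sum>t\<in>{t. inner t = n}. real (card (branches t))) / real (card {t. inner t = n})"

end

theory Submission
  imports Defs
begin

text \<open>A branch is determined by its topmost node, which is the root or a node labelled
  differently from its parent. An inner node shares its label with exactly one child when its
  subtrees have different registers, and with none otherwise; so a tree with \<open>n\<close> inner nodes
  has \<open>1 + n + e\<close> branches, \<open>e\<close> being the number of inner nodes with subtrees of equal register.

  Summed over trees, these statistics have generating functions satisfying functional
  equations of the form \<open>f (1 - 2 z g) = z h\<close>, which determine \<open>f\<close>. Under the substitution
  \<open>z = u / (1 + u)\<^sup>2\<close>, i.e. \<open>u = C(z) - 1\<close> for the Catalan series \<open>C\<close>, the solutions are
  explicit rational series; the trees of register \<open>p\<close>, for instance, have generating function
  \<open>(1 - u\<^sup>2) u\<^bsup>2\<^sup>p - 1\<^esup> / (1 - u\<^bsup>2\<^sup>p\<^sup>+\<^sup>1\<^esup>)\<close>. The total number of branches then has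
  generating function \<open>\<Sum>\<^sub>j (w(j + 1) - w(j - 1)) u\<^sup>j\<close> with \<open>w(k) = (2 - 2\<^bsup>-v\<^sub>2(k)\<^esup>) k\<close>.
  Finally the coefficient of \<open>z\<^sup>n\<close> in \<open>u\<^sup>j\<close> is a difference of binomial coefficients, and a
  summation by parts gives the formula.\<close>

section \<open>Branches and their heads\<close>

lemma subt_Leaf [simp]: "subt Leaf p = Leaf"
  by (cases p) auto

lemma subt_append: "subt t (p @ q) = subt (subt t p) q"
proof (induction p arbitrary: t)
  case (Cons b p)
  then show ?case by (cases t; cases b) auto
qed simp

lemma Reg_subt_le: "Reg (subt t q) \<le> Reg t"
proof (induction t arbitrary: q)
  case (Node l r)
  show ?case
  proof (cases q)
    case (Cons b q')
    have "Reg (subt l q') \<le> Reg l" "Reg (subt r q') \<le> Reg r" using Node.IH by auto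
    then show ?thesis using Cons by (cases b) auto
  qed simp
qed simp

lemma lab_append_le: "lab t (p @ q) \<le> lab t p"
  unfolding lab_def by (simp add: subt_append Reg_subt_le)

lemma lab_Nil [simp]: "lab t [] = Reg t"
  by (simp add: lab_def)

lemma lab_Node_Cons [simp]:
  "lab (Node l r) (False # p) = lab l p"
  "lab (Node l r) (True # p) = lab r p"
  by (simp_all add: lab_def)

lemma Nil_in_pos [simp]: "[] \<in> pos t"
  by (cases t) auto

lemma finite_pos: "finite (pos t)"
  by (induction t) auto

lemma pos_prefix: "p @ q \<in> pos t \<Longrightarrow> p \<in> pos t"
proof (induction p arbitrary: t)
  case (Cons b p)
  then show ?case by (cases t; cases b) auto
qed simp

text \<open>Labels never increase along a path, so the nodes of a path carrying the label of its
  endpoint form a final segment of the path; its first node is the top of the endpoint's branch.\<close>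

definition top_depth :: "bt \<Rightarrow> bool list \<Rightarrow> nat" where
  "top_depth t p = (LEAST i. lab t (take i p) = lab t p)"

definition branch_top :: "bt \<Rightarrow> bool list \<Rightarrow> bool list" where
  "branch_top t p = take (top_depth t p) p"

lemma top_depth_le: "top_depth t p \<le> length p"
  unfolding top_depth_def by (rule Least_le) simp

lemma lab_branch_top: "lab t (branch_top t p) = lab t p"
  unfolding top_depth_def branch_top_def by (rule LeastI[of _ "length p"]) simp

lemma lab_take_less_top_depth: "i < top_depth t p \<Longrightarrow> lab t (take i p) \<noteq> lab t p"
  unfolding top_depth_def by (rule not_less_Least)

lemma lab_take_ge_top_depth:
  assumes "top_depth t p \<le> i"
  shows "lab t (take i p) = lab t p"
proof -
  obtain j where "take i p = branch_top t p @ take j (drop (top_depth t p) p)"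
    using assms by (metis branch_top_def le_Suc_ex take_add)
  then have "lab t (take i p) \<le> lab t p"
    using lab_append_le lab_branch_top by metis
  moreover have "lab t p \<le> lab t (take i p)"
    using lab_append_le[of t "take i p" "drop i p"] by simp
  ultimately show ?thesis by simp
qed

lemma branch_top_snoc:
  assumes "lab t (p @ [b]) = lab t p"
  shows "branch_top t (p @ [b]) = branch_top t p"
proof -
  have "top_depth t (p @ [b]) = top_depth t p"
    unfolding top_depth_def[of t "p @ [b]"]
  proof (rule Least_equality)
    show "lab t (take (top_depth t p) (p @ [b])) = lab t (p @ [b])"
      using top_depth_le[of t p] lab_branch_top[of t p] assms by (simp add: branch_top_def)
  next
    fix i assume "lab t (take i (p @ [b])) = lab t (p @ [b])"
    then show "top_depth t p \<le> i"
      using lab_take_less_top_depth[of i t p] top_depth_le[of t p] assms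
      by (cases "i < top_depth t p") auto
  qed
  then show ?thesis using top_depth_le[of t p] by (simp add: branch_top_def)
qed

lemma branch_top_rtrancl_redge:
  assumes "(p, q) \<in> (redge t r)\<^sup>*"
  shows "branch_top t p = branch_top t q"
  using assms
proof (induction rule: rtrancl_induct)
  case (step y z)
  then have "lab t y = lab t z" "(\<exists>b. z = y @ [b]) \<or> (\<exists>b. y = z @ [b])"
    unfolding redge_def labelled_def by auto
  then show ?case using step.IH branch_top_snoc by metis
qed simp

lemma rtrancl_redge_branch_top:
  assumes "p \<in> pos t"
  shows "(branch_top t p, p) \<in> (redge t (lab t p))\<^sup>*"
proof -
  have "(branch_top t p, take (top_depth t p + j) p) \<in> (redge t (lab t p))\<^sup>*"
    if "top_depth t p + j \<le> length p" for j
    using that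
  proof (induction j)
    case (Suc j)
    let ?a = "take (top_depth t p + j) p" and ?b = "take (top_depth t p + Suc j) p"
    have "?b = ?a @ [p ! (top_depth t p + j)]"
      using Suc.prems by (simp add: take_Suc_conv_app_nth)
    moreover have "?a \<in> pos t" "?b \<in> pos t"
      using assms by (metis append_take_drop_id pos_prefix)+
    moreover have "lab t ?a = lab t p" "lab t ?b = lab t p"
      by (simp_all add: lab_take_ge_top_depth)
    ultimately have "(?a, ?b) \<in> redge t (lab t p)"
      unfolding redge_def labelled_def by auto
    with Suc show ?case by (simp add: rtrancl.rtrancl_into_rtrancl)
  qed (simp add: branch_top_def)
  from this[of "length p - top_depth t p"] show ?thesis
    using top_depth_le[of t p] by simp
qed

definition heads :: "bt \<Rightarrow> bool list set" where
  "heads t = {p \<in> pos t. p = [] \<or> lab t (butlast p) \<noteq> lab t p}"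

lemma branch_top_in_heads:
  assumes "p \<in> pos t"
  shows "branch_top t p \<in> heads t"
proof -
  have "lab t (butlast (branch_top t p)) \<noteq> lab t (branch_top t p)"
    if "branch_top t p \<noteq> []"
  proof -
    have "top_depth t p > 0" using that by (auto simp: branch_top_def)
    moreover have "butlast (branch_top t p) = take (top_depth t p - 1) p"
      using top_depth_le[of t p] by (simp add: branch_top_def butlast_take)
    ultimately show ?thesis
      using lab_take_less_top_depth[of "top_depth t p - 1" t p] lab_branch_top[of t p] by simp
  qed
  moreover have "branch_top t p \<in> pos t"
    using assms unfolding branch_top_def by (metis append_take_drop_id pos_prefix)
  ultimately show ?thesis unfolding heads_def by auto
qed

lemma branch_top_head:
  assumes "p \<in> heads t"
  shows "branch_top t p = p"
proof (rule ccontr)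
  assume "branch_top t p \<noteq> p"
  then have "top_depth t p < length p"
    using top_depth_le[of t p] by (metis branch_top_def le_neq_implies_less take_all)
  then have "lab t (butlast p) = lab t p"
    by (simp add: butlast_conv_take lab_take_ge_top_depth)
  moreover have "p \<noteq> []" using \<open>top_depth t p < length p\<close> by auto
  ultimately show False using assms unfolding heads_def by auto
qed

definition branch_of :: "bt \<Rightarrow> bool list \<Rightarrow> bool list set" where
  "branch_of t p = (redge t (lab t p))\<^sup>* `` {p}"

lemma branches_eq_image_pos: "branches t = branch_of t ` pos t"
  unfolding branches_def rbranches_def quotient_def labelled_def branch_of_def by auto

lemma branch_of_branch_top:
  assumes "p \<in> pos t"
  shows "branch_of t (branch_top t p) = branch_of t p"
proof -
  let ?R = "(redge t (lab t p))\<^sup>*"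
  have "sym ?R"
    by (intro sym_rtrancl) (auto simp: sym_def redge_def)
  moreover have "(branch_top t p, p) \<in> ?R"
    using assms by (rule rtrancl_redge_branch_top)
  ultimately have "?R `` {branch_top t p} = ?R `` {p}"
    by (auto dest: symD intro: rtrancl_trans)
  then show ?thesis unfolding branch_of_def lab_branch_top by simp
qed

lemma branches_eq_image_heads: "branches t = branch_of t ` heads t"
proof
  show "branches t \<subseteq> branch_of t ` heads t"
    unfolding branches_eq_image_pos
    using branch_of_branch_top branch_top_in_heads by (metis image_subsetI imageI)
qed (auto simp: branches_eq_image_pos heads_def)

lemma inj_on_branch_of_heads: "inj_on (branch_of t) (heads t)"
proof
  fix p q assume "p \<in> heads t" "q \<in> heads t" and "branch_of t p = branch_of t q"
  then have "(q, p) \<in> (redge t (lab t q))\<^sup>*" unfolding branch_of_def by blast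
  then have "branch_top t q = branch_top t p" by (rule branch_top_rtrancl_redge)
  with \<open>p \<in> heads t\<close> \<open>q \<in> heads t\<close> show "p = q" by (simp add: branch_top_head)
qed

lemma card_branches_eq_card_heads: "card (branches t) = card (heads t)"
  by (simp add: branches_eq_image_heads card_image inj_on_branch_of_heads)

fun equal_children :: "bt \<Rightarrow> nat" where
  "equal_children Leaf = 0"
| "equal_children (Node l r) =
     equal_children l + equal_children r + (if Reg l = Reg r then 1 else 0)"

lemma heads_Node:
  "heads (Node l r) = insert []
     (Cons False ` (heads l - (if Reg l = Reg (Node l r) then {[]} else {})) \<union>
      Cons True ` (heads r - (if Reg r = Reg (Node l r) then {[]} else {})))"
proof -
  have "b # p \<in> heads (Node l r) \<longleftrightarrow>
     p \<in> heads (if b then r else l) \<and> (p = [] \<longrightarrow> Reg (if b then r else l) \<noteq> Reg (Node l r))"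
    for b p
    by (cases "p = []"; cases b) (auto simp: heads_def)
  then show ?thesis
    by (intro set_eqI, case_tac x) (auto simp: heads_def)
qed

lemma card_heads: "card (heads t) = 1 + inner t + equal_children t"
proof (induction t)
  case Leaf
  have "heads Leaf = {[]}" by (auto simp: heads_def)
  then show ?case by simp
next
  case (Node l r)
  let ?A = "heads l - (if Reg l = Reg (Node l r) then {[]} else {})"
  let ?B = "heads r - (if Reg r = Reg (Node l r) then {[]} else {})"
  have fin: "finite (heads t)" for t
    by (simp add: heads_def finite_pos)
  have "[] \<in> heads t" for t
    by (simp add: heads_def)
  then have "card ?A = card (heads l) - (if Reg l = Reg (Node l r) then 1 else 0)"
    "card ?B = card (heads r) - (if Reg r = Reg (Node l r) then 1 else 0)"
    by (simp_all add: fin card_Diff_singleton)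
  moreover have "card (heads (Node l r)) = Suc (card (Cons False ` ?A \<union> Cons True ` ?B))"
    unfolding heads_Node using fin by (subst card_insert_disjoint) auto
  moreover have "card (Cons False ` ?A \<union> Cons True ` ?B) = card ?A + card ?B"
    using fin by (subst card_Un_disjoint) (auto simp: card_image)
  ultimately show ?case using Node.IH by (auto simp: max_def)
qed

lemma card_branches: "card (branches t) = 1 + inner t + equal_children t"
  by (simp add: card_branches_eq_card_heads card_heads)

section \<open>Generating functions of tree statistics\<close>

definition trees :: "nat \<Rightarrow> bt set" where
  "trees n = {t. inner t = n}"

lemma trees_0: "trees 0 = {Leaf}"
  unfolding trees_def by (auto elim: inner.elims)

lemma trees_Suc:
  "trees (Suc n) = case_prod Node ` (SIGMA l : (\<Union>i\<le>n. trees i). trees (n - inner l))"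
  unfolding trees_def by (force elim: inner.elims)

lemma finite_trees: "finite (trees n)"
proof (induction n rule: less_induct)
  case (less n)
  then show ?case
    by (cases n) (auto simp: trees_0 trees_Suc intro!: finite_SigmaI)
qed

lemma sum_trees_Suc:
  "(\<Sum>t\<in>trees (Suc n). f t) = (\<Sum>i\<le>n. \<Sum>l\<in>trees i. \<Sum>r\<in>trees (n - i). f (Node l r))"
proof -
  let ?S = "SIGMA l : (\<Union>i\<le>n. trees i). trees (n - inner l)"
  have "inj_on (case_prod Node) ?S" by (auto simp: inj_on_def)
  then have "(\<Sum>t\<in>trees (Suc n). f t) = (\<Sum>(l, r)\<in>?S. f (Node l r))"
    unfolding trees_Suc by (subst sum.reindex) (simp_all add: split_def)
  also have "\<dots> = (\<Sum>l\<in>(\<Union>i\<le>n. trees i). \<Sum>r\<in>trees (n - inner l). f (Node l r))"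
    by (rule sum.Sigma[symmetric]) (auto simp: finite_trees)
  also have "\<dots> = (\<Sum>i\<le>n. \<Sum>l\<in>trees i. \<Sum>r\<in>trees (n - inner l). f (Node l r))"
    using finite_trees by (subst sum.UNION_disjoint) (auto simp: trees_def)
  also have "\<dots> = (\<Sum>i\<le>n. \<Sum>l\<in>trees i. \<Sum>r\<in>trees (n - i). f (Node l r))"
    by (intro sum.cong refl) (auto simp: trees_def)
  finally show ?thesis .
qed

definition tree_gf :: "(bt \<Rightarrow> real) \<Rightarrow> real fps" where
  "tree_gf f = Abs_fps (\<lambda>n. \<Sum>t\<in>trees n. f t)"

definition pair_gf :: "(bt \<Rightarrow> bt \<Rightarrow> real) \<Rightarrow> real fps" where
  "pair_gf g = Abs_fps (\<lambda>n. \<Sum>i\<le>n. \<Sum>l\<in>trees i. \<Sum>r\<in>trees (n - i). g l r)"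

lemma tree_gf_nth: "tree_gf f $ n = (\<Sum>t\<in>trees n. f t)"
  by (simp add: tree_gf_def)

lemma tree_gf_decompose: "tree_gf f = fps_const (f Leaf) + fps_X * pair_gf (\<lambda>l r. f (Node l r))"
  by (rule fps_ext, case_tac n) (simp_all add: tree_gf_def pair_gf_def sum_trees_Suc trees_0)

lemma tree_gf_sum: "tree_gf (\<lambda>t. \<Sum>q\<in>Q. f q t) = (\<Sum>q\<in>Q. tree_gf (f q))"
  by (rule fps_ext) (simp add: tree_gf_nth fps_sum_nth sum.swap[of _ Q])

lemma pair_gf_add: "pair_gf (\<lambda>l r. g l r + h l r) = pair_gf g + pair_gf h"
  by (rule fps_ext) (simp add: pair_gf_def sum.distrib)

lemma pair_gf_sum: "pair_gf (\<lambda>l r. \<Sum>q\<in>Q. g q l r) = (\<Sum>q\<in>Q. pair_gf (g q))"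
  by (rule fps_ext) (simp add: pair_gf_def fps_sum_nth sum.swap[of _ Q])

lemma pair_gf_mult: "pair_gf (\<lambda>l r. a l * b r) = tree_gf a * tree_gf b"
  by (rule fps_ext) (simp add: pair_gf_def tree_gf_nth fps_mult_nth atLeast0AtMost sum_product)

definition catalan_gf :: "real fps" where
  "catalan_gf = tree_gf (\<lambda>_. 1)"

definition size_gf :: "real fps" where
  "size_gf = tree_gf (\<lambda>t. real (inner t))"

definition reg_gf :: "nat \<Rightarrow> real fps" where
  "reg_gf p = tree_gf (\<lambda>t. of_bool (Reg t = p))"

text \<open>Only inner nodes with both registers at most \<open>N\<close> are counted, so that the functional
  equation involves finitely many \<open>reg_gf\<close>; for trees of size at most \<open>N\<close> nothing is lost.\<close>

fun equal_children_upto :: "nat \<Rightarrow> bt \<Rightarrow> nat" where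
  "equal_children_upto N Leaf = 0"
| "equal_children_upto N (Node l r) = equal_children_upto N l + equal_children_upto N r
     + (if Reg l = Reg r \<and> Reg l \<le> N then 1 else 0)"

definition equal_children_gf :: "nat \<Rightarrow> real fps" where
  "equal_children_gf N = tree_gf (\<lambda>t. real (equal_children_upto N t))"

lemma catalan_gf_eq: "catalan_gf = 1 + fps_X * catalan_gf\<^sup>2"
  using tree_gf_decompose[of "\<lambda>_. 1"] pair_gf_mult[of "\<lambda>_. 1" "\<lambda>_. 1"]
  by (simp add: catalan_gf_def power2_eq_square)

lemma size_gf_eq: "size_gf = fps_X * (2 * size_gf * catalan_gf + catalan_gf\<^sup>2)"
proof -
  have "(\<lambda>l r. real (inner (Node l r))) =
      (\<lambda>l r. (1 * 1 + real (inner l) * 1) + 1 * real (inner r))"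
    by (simp add: fun_eq_iff)
  from tree_gf_decompose[of "\<lambda>t. real (inner t)", unfolded this pair_gf_add pair_gf_mult]
  show ?thesis
    by (simp add: algebra_simps power2_eq_square flip: size_gf_def catalan_gf_def)
qed

lemma reg_gf_0: "reg_gf 0 = 1"
proof -
  have Node: "(\<lambda>l r. of_bool (Reg (Node l r) = 0)) = (\<lambda>l r. 0)"
    by (auto simp: fun_eq_iff max_def)
  have "pair_gf (\<lambda>l r. 0) = 0"
    by (rule fps_ext) (simp add: pair_gf_def)
  with tree_gf_decompose[of "\<lambda>t. of_bool (Reg t = 0)", unfolded Node]
  show ?thesis by (simp add: reg_gf_def)
qed

lemma sum_of_bool_eq:
  "finite Q \<Longrightarrow> (\<Sum>q\<in>Q. of_bool (x = q) :: 'a::comm_semiring_1) = of_bool (x \<in> Q)"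
  by (simp add: of_bool_def)

lemma tree_gf_Reg_less: "tree_gf (\<lambda>t. of_bool (Reg t < p)) = (\<Sum>q<p. reg_gf q)"
  using sum_of_bool_eq[where 'a = real and Q = "{..<p}"] by (simp add: reg_gf_def flip: tree_gf_sum)

lemma reg_gf_Suc:
  "reg_gf (Suc q) = fps_X * (2 * reg_gf (Suc q) * (\<Sum>q'<Suc q. reg_gf q') + (reg_gf q)\<^sup>2)"
proof -
  have "(\<lambda>l r. of_bool (Reg (Node l r) = Suc q)) =
      (\<lambda>l r. (of_bool (Reg l = Suc q) * of_bool (Reg r < Suc q)
       + of_bool (Reg l < Suc q) * of_bool (Reg r = Suc q))
      + of_bool (Reg l = q) * (of_bool (Reg r = q) :: real))"
    by (auto simp: fun_eq_iff max_def)
  from tree_gf_decompose[of "\<lambda>t. of_bool (Reg t = Suc q)",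
      unfolded this pair_gf_add pair_gf_mult tree_gf_Reg_less]
  show ?thesis
    by (simp add: algebra_simps power2_eq_square flip: reg_gf_def)
qed

lemma equal_children_gf_eq:
  "equal_children_gf N =
     fps_X * (2 * equal_children_gf N * catalan_gf + (\<Sum>p\<le>N. (reg_gf p)\<^sup>2))"
proof -
  have "(\<lambda>l r. real (equal_children_upto N (Node l r))) =
      (\<lambda>l r. (real (equal_children_upto N l) * 1 + 1 * real (equal_children_upto N r))
      + (\<Sum>p\<le>N. of_bool (Reg l = p) * of_bool (Reg r = p)))"
    (is "?L = ?R")
  proof (intro ext)
    fix l r
    have "of_bool (Reg l = p) * of_bool (Reg r = p) = (of_bool (Reg l = Reg r \<and> Reg l = p) :: real)"
      for p by auto
    then show "?L l r = ?R l r"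
      by (cases "Reg l = Reg r") (simp_all add: sum_of_bool_eq)
  qed
  from tree_gf_decompose[of "\<lambda>t. real (equal_children_upto N t)",
      unfolded this pair_gf_add pair_gf_sum pair_gf_mult]
  show ?thesis
    by (simp add: algebra_simps power2_eq_square
        flip: equal_children_gf_def catalan_gf_def reg_gf_def)
qed

section \<open>Rational series in \<open>u\<close>\<close>

lemma fps_X_power_pred: "0 < M \<Longrightarrow> fps_X ^ M = fps_X * (fps_X ^ (M - 1) :: 'a::comm_ring_1 fps)"
  by (cases M) simp_all

lemma one_minus_X_power_inverse: "0 < K \<Longrightarrow> (1 - fps_X ^ K) * inverse (1 - fps_X ^ K :: real fps) = 1"
  by (rule inverse_mult_eq_1') simp

definition z_of_u :: "real fps" where
  "z_of_u = fps_X * inverse ((1 + fps_X)\<^sup>2)"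

definition reg_gf_u :: "nat \<Rightarrow> real fps" where
  "reg_gf_u q = (1 - fps_X\<^sup>2) * fps_X ^ (2 ^ q - 1) * inverse (1 - fps_X ^ (2 ^ Suc q))"

lemma inverse_one_plus_X_squared: "(1 + fps_X)\<^sup>2 * inverse ((1 + fps_X)\<^sup>2 :: real fps) = 1"
  by (rule inverse_mult_eq_1') (simp add: fps_nth_power_0)

lemma reg_gf_u_0: "reg_gf_u 0 = 1"
  by (simp add: reg_gf_u_def inverse_mult_eq_1')

lemma sum_reg_gf_u:
  "(\<Sum>q<p. reg_gf_u q) =
     (1 + fps_X) - (1 - fps_X\<^sup>2) * fps_X ^ (2 ^ p - 1) * inverse (1 - fps_X ^ (2 ^ p))"
proof (induction p)
  case 0
  have "(1 - fps_X) * inverse (1 - fps_X :: real fps) = 1"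
    using one_minus_X_power_inverse[of 1] by simp
  then show ?case by simp algebra
next
  case (Suc p)
  define w :: "real fps" where "w = fps_X ^ (2 ^ p - 1)"
  define v :: "real fps" where "v = fps_X ^ 2 ^ p"
  have pow: "fps_X ^ (2 ^ Suc p - 1) = v * w" "fps_X ^ 2 ^ Suc p = v\<^sup>2"
    by (simp_all add: v_def w_def flip: power_add power_mult)
  have "(1 - v) * inverse (1 - v) = 1" "(1 - v\<^sup>2) * inverse (1 - v\<^sup>2) = 1"
    using one_minus_X_power_inverse[of "2 ^ p"] one_minus_X_power_inverse[of "2 ^ Suc p"]
    unfolding pow(2) v_def by simp_all
  then have "inverse (1 - v) - inverse (1 - v\<^sup>2) = v * inverse (1 - v\<^sup>2)"
    by algebra
  moreover have "(\<Sum>q<Suc p. reg_gf_u q) =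
      (1 + fps_X) - (1 - fps_X\<^sup>2) * w * inverse (1 - v) + (1 - fps_X\<^sup>2) * w * inverse (1 - v\<^sup>2)"
    unfolding sum.lessThan_Suc Suc.IH by (simp only: reg_gf_u_def pow(2) flip: v_def w_def)
  ultimately show ?case
    unfolding pow by algebra
qed

lemma reg_gf_u_Suc:
  "reg_gf_u (Suc q) * (1 - 2 * z_of_u * (\<Sum>q'<Suc q. reg_gf_u q')) = z_of_u * (reg_gf_u q)\<^sup>2"
proof -
  define w :: "real fps" where "w = fps_X ^ (2 ^ q - 1)"
  define v :: "real fps" where "v = fps_X ^ 2 ^ q"
  have v: "v = fps_X * w"
    unfolding v_def w_def by (simp add: fps_X_power_pred)
  have pow: "fps_X ^ (2 ^ Suc q - 1) = v * w" "fps_X ^ 2 ^ Suc q = v\<^sup>2"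
    "fps_X ^ 2 ^ Suc (Suc q) = v ^ 4"
    by (simp_all add: v_def w_def flip: power_add power_mult)
  have "(1 - v\<^sup>2) * inverse (1 - v\<^sup>2) = 1" "(1 - v ^ 4) * inverse (1 - v ^ 4) = 1"
    using one_minus_X_power_inverse[of "2 ^ Suc q"] one_minus_X_power_inverse[of "2 ^ Suc (Suc q)"]
    unfolding pow by simp_all
  with v inverse_one_plus_X_squared show ?thesis
    unfolding sum_reg_gf_u unfolding reg_gf_u_def z_of_u_def pow w_def[symmetric] by algebra
qed

text \<open>The series \<open>\<Sum>\<^sub>m\<^sub>\<ge>\<^sub>1 c(m) u\<^bsup>mK-1\<^esup>\<close>; the value \<open>c 0\<close> is not used.\<close>

definition dilated_gf :: "nat \<Rightarrow> (nat \<Rightarrow> real) \<Rightarrow> real fps" where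
  "dilated_gf K c = Abs_fps (\<lambda>j. if K dvd Suc j then c (Suc j div K) else 0)"

lemma dilated_gf_mult_one_minus_X_power:
  assumes "0 < K" "c 0 = 0"
  shows "dilated_gf K c * (1 - fps_X ^ K) = dilated_gf K (\<lambda>m. c m - c (m - 1))"
proof (rule fps_ext)
  fix j
  have "(dilated_gf K c * (1 - fps_X ^ K)) $ j =
      dilated_gf K c $ j - (if j < K then 0 else dilated_gf K c $ (j - K))"
    by (simp add: algebra_simps fps_X_power_mult_nth)
  moreover have "K dvd Suc (j - K) \<longleftrightarrow> K dvd Suc j" "Suc (j - K) div K = Suc j div K - 1"
    if "\<not> j < K"
    using that assms(1) dvd_add_left_iff[of K K "Suc (j - K)"]
      div_add_self2[of K "Suc (j - K)"] by (simp_all add: Suc_diff_le)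
  moreover have "Suc j div K = 1" if "j < K" "K dvd Suc j"
  proof -
    have "Suc j = K" using that dvd_imp_le[of K "Suc j"] by simp
    with assms(1) show ?thesis by simp
  qed
  ultimately show "(dilated_gf K c * (1 - fps_X ^ K)) $ j =
      dilated_gf K (\<lambda>m. c m - c (m - 1)) $ j"
    using assms(2) by (auto simp: dilated_gf_def)
qed

lemma dilated_gf_of_nat_mult:
  assumes "0 < K"
  shows "dilated_gf K real * (1 - fps_X ^ K)\<^sup>2 = fps_X ^ (K - 1)"
proof -
  have "dilated_gf K real * (1 - fps_X ^ K)\<^sup>2 =
      dilated_gf K real * (1 - fps_X ^ K) * (1 - fps_X ^ K)"
    by (simp add: power2_eq_square mult.assoc)
  also have "\<dots> = dilated_gf K (\<lambda>m. real m - real (m - 1) - (real (m - 1) - real (m - 1 - 1)))"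
    using assms by (simp add: dilated_gf_mult_one_minus_X_power)
  also have "\<dots> = fps_X ^ (K - 1)"
  proof (rule fps_ext)
    fix j
    show "dilated_gf K (\<lambda>m. real m - real (m - 1) - (real (m - 1) - real (m - 1 - 1))) $ j =
        (fps_X ^ (K - 1) :: real fps) $ j"
    proof (cases "K dvd Suc j")
      case True
      then obtain m where m: "Suc j = K * m" ..
      with assms have "0 < m" by (cases m) auto
      with m assms show ?thesis by (cases "m = 1") (auto simp: dilated_gf_def of_nat_diff)
    next
      case False
      with assms show ?thesis by (auto simp: dilated_gf_def)
    qed
  qed
  finally show ?thesis .
qed

definition equal_children_gf_u :: "nat \<Rightarrow> real fps" where
  "equal_children_gf_u N = (1 - fps_X\<^sup>2) * (\<Sum>p\<le>N. dilated_gf (2 ^ Suc p) real)"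

lemma equal_children_gf_u_eq:
  "equal_children_gf_u N * (1 - 2 * z_of_u * (1 + fps_X)) = z_of_u * (\<Sum>p\<le>N. (reg_gf_u p)\<^sup>2)"
proof -
  have "(1 - fps_X\<^sup>2) * dilated_gf (2 ^ Suc p) real * (1 - 2 * z_of_u * (1 + fps_X)) =
      z_of_u * (reg_gf_u p)\<^sup>2" for p
  proof -
    define w :: "real fps" where "w = fps_X ^ (2 ^ p - 1)"
    define v :: "real fps" where "v = fps_X ^ 2 ^ p"
    have v: "v = fps_X * w"
      unfolding v_def w_def by (simp add: fps_X_power_pred)
    have pow: "fps_X ^ (2 ^ Suc p - 1) = v * w" "fps_X ^ 2 ^ Suc p = v\<^sup>2"
      by (simp_all add: v_def w_def flip: power_add power_mult)
    have "dilated_gf (2 ^ Suc p) real * (1 - v\<^sup>2)\<^sup>2 = v * w"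
      using dilated_gf_of_nat_mult[of "2 ^ Suc p"] unfolding pow by simp
    moreover have "(1 - v\<^sup>2) * inverse (1 - v\<^sup>2) = 1"
      using one_minus_X_power_inverse[of "2 ^ Suc p"] unfolding pow by simp
    ultimately show ?thesis
      using v inverse_one_plus_X_squared
      unfolding reg_gf_u_def z_of_u_def pow w_def[symmetric] by algebra
  qed
  then show ?thesis
    by (simp add: equal_children_gf_u_def sum_distrib_left sum_distrib_right)
qed

definition size_gf_u :: "real fps" where
  "size_gf_u = fps_X * (1 + fps_X) * inverse (1 - fps_X)"

lemma inverse_one_minus_X: "(1 - fps_X) * inverse (1 - fps_X :: real fps) = 1"
  using one_minus_X_power_inverse[of 1] by simp

lemma size_gf_u_eq: "size_gf_u * (1 - 2 * z_of_u * (1 + fps_X)) = z_of_u * (1 + fps_X)\<^sup>2"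
  using inverse_one_plus_X_squared inverse_one_minus_X
  unfolding size_gf_u_def z_of_u_def by algebra

lemma one_plus_X_plus_size_gf_u:
  "1 + fps_X + size_gf_u = Abs_fps (\<lambda>j. if j = 0 then 1 else 2)" (is "_ = ?R")
proof -
  have "?R * (1 - fps_X) = 1 + fps_X"
    by (rule fps_ext, case_tac n) (simp_all add: algebra_simps fps_X_mult_nth)
  with inverse_one_minus_X show ?thesis
    unfolding size_gf_u_def by algebra
qed

section \<open>The substitution \<open>z = u / (1 + u)\<^sup>2\<close>\<close>

definition u_of_z :: "real fps" where
  "u_of_z = catalan_gf - 1"

lemma u_of_z_nth_0 [simp]: "u_of_z $ 0 = 0"
  by (simp add: u_of_z_def catalan_gf_def tree_gf_nth trees_0)

lemma catalan_gf_eq_u_of_z: "catalan_gf = 1 + u_of_z"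
  by (simp add: u_of_z_def)

lemma u_of_z_eq: "u_of_z = fps_X * (1 + u_of_z)\<^sup>2"
  using catalan_gf_eq unfolding u_of_z_def by algebra

lemmas compose_u_of_z_simps =
  fps_compose_add_distrib fps_compose_sub_distrib fps_compose_mult_distrib[OF u_of_z_nth_0]
  fps_compose_power[OF u_of_z_nth_0, symmetric] fps_compose_sum_distrib

lemma numeral_compose_u_of_z [simp]: "numeral k oo u_of_z = numeral k"
  by (simp add: numeral_fps_const)

lemma z_of_u_compose_u_of_z: "z_of_u oo u_of_z = fps_X"
proof -
  have "inverse ((1 + fps_X)\<^sup>2) oo u_of_z = inverse ((1 + u_of_z)\<^sup>2)"
    by (subst fps_inverse_compose) (simp_all add: fps_nth_power_0 compose_u_of_z_simps)
  then have "z_of_u oo u_of_z = u_of_z * inverse ((1 + u_of_z)\<^sup>2)"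
    by (simp add: z_of_u_def compose_u_of_z_simps)
  also have "\<dots> = fps_X * ((1 + u_of_z)\<^sup>2 * inverse ((1 + u_of_z)\<^sup>2))"
    by (subst u_of_z_eq) (simp add: mult.assoc)
  also have "\<dots> = fps_X"
    by (subst inverse_mult_eq_1') (simp_all add: fps_nth_power_0)
  finally show ?thesis .
qed

text \<open>Each functional equation in \<open>z\<close> is of the form \<open>f (1 - 2 z g) = z h\<close>, which determines \<open>f\<close>;
  so it suffices that the candidate in \<open>u\<close>, composed with \<open>u_of_z\<close>, satisfies it too.\<close>

lemma fps_functional_eq_unique:
  fixes f f' g h :: "real fps"
  assumes "f = fps_X * (2 * f * g + h)" "f' * (1 - 2 * fps_X * g) = fps_X * h"
  shows "f = f'"
proof -
  have "f * (1 - 2 * fps_X * g) = f' * (1 - 2 * fps_X * g)"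
    using assms by algebra
  moreover have "(1 - 2 * fps_X * g) $ 0 \<noteq> 0"
    by simp
  then have "1 - 2 * fps_X * g \<noteq> 0"
    by (metis fps_zero_nth)
  ultimately show ?thesis by simp
qed

lemma compose_u_of_z_functional_eq:
  assumes "f * (1 - 2 * z_of_u * g) = z_of_u * h"
  shows "(f oo u_of_z) * (1 - 2 * fps_X * (g oo u_of_z)) = fps_X * (h oo u_of_z)"
  using arg_cong[OF assms, of "\<lambda>f. f oo u_of_z"]
  by (simp only: compose_u_of_z_simps z_of_u_compose_u_of_z numeral_compose_u_of_z fps_compose_1)

lemma reg_gf_eq_compose: "reg_gf p = reg_gf_u p oo u_of_z"
proof (induction p rule: less_induct)
  case (less p)
  show ?case
  proof (cases p)
    case 0
    then show ?thesis by (simp add: reg_gf_0 reg_gf_u_0)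
  next
    case (Suc q)
    have "(reg_gf_u p oo u_of_z) * (1 - 2 * fps_X * ((\<Sum>q'<p. reg_gf_u q') oo u_of_z)) =
        fps_X * ((reg_gf_u q)\<^sup>2 oo u_of_z)"
      using compose_u_of_z_functional_eq[OF reg_gf_u_Suc[of q]] by (simp only: Suc)
    then have "(reg_gf_u p oo u_of_z) * (1 - 2 * fps_X * (\<Sum>q'<p. reg_gf q')) =
        fps_X * (reg_gf q)\<^sup>2"
      using less Suc by (simp add: compose_u_of_z_simps)
    with reg_gf_Suc[of q] show ?thesis
      unfolding Suc by (rule fps_functional_eq_unique)
  qed
qed

lemma size_gf_eq_compose: "size_gf = size_gf_u oo u_of_z"
  using size_gf_eq
proof (rule fps_functional_eq_unique)
  show "(size_gf_u oo u_of_z) * (1 - 2 * fps_X * catalan_gf) = fps_X * catalan_gf\<^sup>2"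
    using compose_u_of_z_functional_eq[OF size_gf_u_eq]
    by (simp only: compose_u_of_z_simps fps_compose_1
        fps_X_fps_compose_startby0[OF u_of_z_nth_0] flip: catalan_gf_eq_u_of_z)
qed

lemma equal_children_gf_eq_compose: "equal_children_gf N = equal_children_gf_u N oo u_of_z"
  using equal_children_gf_eq
proof (rule fps_functional_eq_unique)
  show "(equal_children_gf_u N oo u_of_z) * (1 - 2 * fps_X * catalan_gf) =
      fps_X * (\<Sum>p\<le>N. (reg_gf p)\<^sup>2)"
    using compose_u_of_z_functional_eq[OF equal_children_gf_u_eq]
    by (simp only: compose_u_of_z_simps fps_compose_1
        fps_X_fps_compose_startby0[OF u_of_z_nth_0] reg_gf_eq_compose flip: catalan_gf_eq_u_of_z)
qed

section \<open>Coefficient extraction\<close>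

lemma u_of_z_power_Suc:
  "u_of_z ^ Suc i = fps_X * (u_of_z ^ i + 2 * u_of_z ^ Suc i + u_of_z ^ Suc (Suc i))"
proof -
  have "u_of_z ^ Suc i = u_of_z ^ i * (fps_X * (1 + u_of_z)\<^sup>2)"
    by (simp only: power_Suc2 flip: u_of_z_eq)
  then show ?thesis by (simp add: algebra_simps power2_eq_square)
qed

lemma u_of_z_power_nth_Suc_Suc:
  "(u_of_z ^ Suc i) $ Suc n =
     (u_of_z ^ i) $ n + 2 * (u_of_z ^ Suc i) $ n + (u_of_z ^ Suc (Suc i)) $ n"
  by (subst u_of_z_power_Suc) (simp add: numeral_fps_const del: power_Suc)

lemma u_of_z_power_nth_0: "(u_of_z ^ j) $ 0 = of_bool (j = 0)"
  by (cases j) (simp_all add: fps_mult_nth_0 del: power_Suc add: power_Suc2)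

lemma u_of_z_power_nth_above: "n < j \<Longrightarrow> (u_of_z ^ j) $ n = 0"
proof -
  assume "n < j"
  have "u_of_z ^ j = fps_X ^ j * (1 + u_of_z) ^ (2 * j)"
    by (subst u_of_z_eq) (simp add: power_mult_distrib power_mult)
  with \<open>n < j\<close> show ?thesis by (simp add: fps_X_power_mult_nth)
qed

lemma binomz_of_nat [simp]: "binomz n (int k) = n choose k"
  by (simp add: binomz_def)

lemma binomz_Suc: "real (binomz (Suc m) a) = real (binomz m a) + real (binomz m (a - 1))"
proof (cases "a \<le> 0")
  case False
  then have "nat a = Suc (nat (a - 1))" by simp
  with False show ?thesis by (simp add: binomz_def)
qed (auto simp: binomz_def)

text \<open>Lagrange inversion for \<open>u = z (1 + u)\<^sup>2\<close>, in the form of a ballot-number difference.\<close>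

lemma u_of_z_power_nth:
  "(u_of_z ^ j) $ Suc m =
     real (binomz (2 * m + 1) (int m + 1 - int j)) - real (binomz (2 * m + 1) (int m - int j))"
proof (induction m arbitrary: j)
  case 0
  show ?case
  proof (cases j)
    case (Suc i)
    then show ?thesis
      using u_of_z_power_nth_Suc_Suc[of i 0]
      by (cases i) (simp_all add: u_of_z_power_nth_0 binomz_def del: power_Suc)
  qed (simp add: binomz_def)
next
  case (Suc m)
  show ?case
  proof (cases j)
    case 0
    have "nat (int (Suc m) + 1) = Suc m + 1" "nat (int (Suc m)) = Suc m"
      by simp_all
    moreover have "(2 * Suc m + 1) choose (Suc m + 1) = (2 * Suc m + 1) choose Suc m"
      by (subst binomial_symmetric) simp_all
    ultimately show ?thesis
      unfolding 0 binomz_def by (simp only: of_nat_0 diff_zero if_False not_less) simp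
  next
    case (Suc i)
    let ?B = "\<lambda>a. real (binomz (2 * m + 1) a)"
    define a where "a = int m + 1 - int i"
    have IH: "(u_of_z ^ i) $ Suc m = ?B a - ?B (a - 1)"
      "(u_of_z ^ Suc i) $ Suc m = ?B (a - 1) - ?B (a - 2)"
      "(u_of_z ^ Suc (Suc i)) $ Suc m = ?B (a - 2) - ?B (a - 3)"
      by (simp_all only: Suc.IH a_def) (simp_all add: algebra_simps)
    have Pascal2: "real (binomz (2 * Suc m + 1) b) = ?B b + 2 * ?B (b - 1) + ?B (b - 2)" for b
      by (simp add: binomz_Suc algebra_simps)
    show ?thesis
      unfolding Suc
      by (subst u_of_z_power_nth_Suc_Suc, simp only: IH Pascal2) (simp add: a_def algebra_simps)
  qed
qed

lemma u_of_z_power_diff_nth: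
  assumes "1 \<le> k"
  shows "(u_of_z ^ (k - 1)) $ n - (u_of_z ^ (k + 1)) $ n =
    real (binomz (2 * n) (int n + 1 - int k)) - 2 * real (binomz (2 * n) (int n - int k))
      + real (binomz (2 * n) (int n - 1 - int k))"
proof (cases n)
  case 0
  with assms show ?thesis
    by (cases "k = 1") (auto simp: u_of_z_power_nth_0 binomz_def)
next
  case (Suc m)
  let ?B = "\<lambda>a. real (binomz (2 * m + 1) a)"
  have "real (binomz (2 * n) a) = ?B a + ?B (a - 1)" for a
    using binomz_Suc[of "2 * m + 1"] by (simp add: Suc)
  with assms show ?thesis
    unfolding Suc u_of_z_power_nth by (simp add: of_nat_diff algebra_simps)
qed

lemma real_card_trees: "real (card (trees n)) = catalan_gf $ n"
  by (simp add: catalan_gf_def tree_gf_nth)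

lemma binomial_ballot_identity:
  assumes "0 < m"
  shows "(m + 2) * ((2 * m + 1) choose (m - 1)) = m * ((2 * m + 1) choose m)"
proof -
  have e: "2 * m + 1 - (m - 1) = m + 2" "2 * m + 1 - 1 = 2 * m"
    using assms by simp_all
  have "(m + 2) * ((2 * m + 1) choose (m - 1)) = (2 * m + 1) * ((2 * m) choose (m - 1))"
    using binomial_absorb_comp[of "2 * m + 1" "m - 1"] by (simp only: e)
  also have "\<dots> = m * ((2 * m + 1) choose m)"
    using times_binomial_minus1_eq[of m "2 * m + 1"] assms by (simp only: e)
  finally show ?thesis .
qed

lemma card_trees: "real (card (trees n)) * real (n + 1) = real ((2 * n) choose n)"
proof (cases n)
  case 0
  then show ?thesis by (simp add: trees_0)
next
  case (Suc m)
  let ?A = "(2 * m + 1) choose m" and ?B = "(2 * m + 1) choose (m - 1)"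
  have "binomz (2 * m + 1) (int m - 1) = of_bool (0 < m) * ?B"
    by (simp add: binomz_def nat_diff_distrib')
  then have card: "real (card (trees n)) = real ?A - of_bool (0 < m) * real ?B"
    using u_of_z_power_nth[of 1 m]
    by (simp only: real_card_trees catalan_gf_eq_u_of_z Suc) simp
  have "(2 * n) choose n = 2 * ?A"
    using binomial_symmetric[of m "2 * m + 1"] by (simp add: Suc)
  moreover have "real (m + 2) * real ?B = real m * real ?A" if "0 < m"
    using arg_cong[OF binomial_ballot_identity[OF that], of real] by (simp only: of_nat_mult)
  ultimately show ?thesis
    unfolding card by (cases "m = 0") (simp_all add: Suc algebra_simps)
qed

lemma Reg_le_inner: "Reg t \<le> inner t"
  by (induction t) auto

lemma equal_children_upto_eq: "inner t \<le> N \<Longrightarrow> equal_children_upto N t = equal_children t"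
proof (induction t)
  case (Node l r)
  then show ?case using Reg_le_inner[of l] by simp
qed simp

definition branch_gf_u :: "nat \<Rightarrow> real fps" where
  "branch_gf_u N = 1 + fps_X + size_gf_u + equal_children_gf_u N"

lemma sum_card_branches_eq_nth_compose:
  assumes "n \<le> N"
  shows "(\<Sum>t\<in>trees n. real (card (branches t))) = (branch_gf_u N oo u_of_z) $ n"
proof -
  have "(\<Sum>t\<in>trees n. real (card (branches t))) =
      (\<Sum>t\<in>trees n. 1 + real (inner t) + real (equal_children_upto N t))"
    using assms by (intro sum.cong) (auto simp: card_branches equal_children_upto_eq trees_def)
  also have "\<dots> = (catalan_gf + size_gf + equal_children_gf N) $ n"
    by (simp add: catalan_gf_def size_gf_def equal_children_gf_def tree_gf_nth sum.distrib)
  also have "catalan_gf + size_gf + equal_children_gf N = branch_gf_u N oo u_of_z"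
    by (simp add: branch_gf_u_def size_gf_eq_compose equal_children_gf_eq_compose
        catalan_gf_eq_u_of_z compose_u_of_z_simps)
  finally show ?thesis .
qed

definition branch_weight :: "nat \<Rightarrow> real" where
  "branch_weight k = (2 - 1 / 2 ^ multiplicity (2::nat) k) * real k"

lemma sum_dilated_gf_nth:
  assumes "1 \<le> k" "k \<le> N + 1"
  shows "(\<Sum>p\<le>N. dilated_gf (2 ^ Suc p) real) $ (k - 1) = real k * (1 - 1 / 2 ^ multiplicity (2::nat) k)"
proof -
  define v where "v = multiplicity (2::nat) k"
  have dvd_iff: "(2::nat) ^ i dvd k \<longleftrightarrow> i \<le> v" for i
    unfolding v_def using assms by (intro power_dvd_iff_le_multiplicity) auto
  then have "2 ^ v \<le> k"
    using assms by (intro dvd_imp_le) auto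
  then have "v \<le> N"
    using assms less_exp[of v] by linarith
  have "(\<Sum>p\<le>N. dilated_gf (2 ^ Suc p) real) $ (k - 1) =
      (\<Sum>p\<le>N. if p < v then real k * (1 / 2 ^ Suc p) else 0)"
    unfolding fps_sum_nth using assms
    by (intro sum.cong) (auto simp: dilated_gf_def real_of_nat_div dvd_iff[of "Suc _", simplified])
  also have "\<dots> = (\<Sum>p<v. real k * (1 / 2 ^ Suc p))"
    using \<open>v \<le> N\<close> by (simp add: sum.If_cases) (intro sum.cong; auto)
  also have "\<dots> = real k * (1 - 1 / 2 ^ v)"
  proof -
    have "(\<Sum>p<v. 1 / 2 ^ Suc p :: real) = 1 - 1 / 2 ^ v"
      by (induction v) (simp_all add: field_simps)
    then show ?thesis by (simp only: sum_distrib_left[symmetric])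
  qed
  finally show ?thesis unfolding v_def .
qed

lemma branch_weight_eq:
  assumes "1 \<le> k" "k \<le> N + 1"
  shows "branch_weight k = real k + (\<Sum>p\<le>N. dilated_gf (2 ^ Suc p) real) $ (k - 1)"
  using sum_dilated_gf_nth[OF assms] by (simp add: branch_weight_def algebra_simps)

lemma branch_gf_u_nth:
  assumes "j \<le> N"
  shows "branch_gf_u N $ j = branch_weight (j + 1) - branch_weight (j - 1)"
proof -
  define S where "S = (\<Sum>p\<le>N. dilated_gf (2 ^ Suc p) real)"
  have "branch_gf_u N = Abs_fps (\<lambda>j. if j = 0 then 1 else 2) + S - fps_X\<^sup>2 * S"
    unfolding branch_gf_u_def one_plus_X_plus_size_gf_u equal_children_gf_u_def S_def
    by (simp add: algebra_simps)
  then have "branch_gf_u N $ j = (if j = 0 then 1 else 2) + S $ j - (if j < 2 then 0 else S $ (j - 2))"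
    by (simp add: fps_X_power_mult_nth)
  moreover have "branch_weight (j + 1) = real (j + 1) + S $ j"
    using branch_weight_eq[of "j + 1" N] assms by (simp add: S_def)
  moreover have "branch_weight (j - 1) = (if j < 2 then 0 else real (j - 1) + S $ (j - 2))"
    using branch_weight_eq[of "j - 1" N] assms by (auto simp: S_def branch_weight_def numeral_2_eq_2)
  ultimately show ?thesis
    by (auto simp: of_nat_diff)
qed

lemma sum_central_difference_by_parts:
  fixes f g :: "nat \<Rightarrow> 'a::comm_ring"
  assumes "f 0 = 0"
  shows "(\<Sum>j\<le>n. (f (j + 1) - f (j - 1)) * g j) =
    (\<Sum>k = 1..n + 1. f k * (g (k - 1) - g (k + 1))) + f n * g (n + 1) + f (n + 1) * g (n + 2)"
  by (induction n) (simp_all add: assms algebra_simps)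

lemma sum_card_branches:
  "(\<Sum>t\<in>trees n. real (card (branches t))) =
    (\<Sum>k = 1..n + 1. branch_weight k * ((u_of_z ^ (k - 1)) $ n - (u_of_z ^ (k + 1)) $ n))"
proof -
  have "(\<Sum>t\<in>trees n. real (card (branches t))) = (branch_gf_u n oo u_of_z) $ n"
    by (rule sum_card_branches_eq_nth_compose) simp
  also have "\<dots> = (\<Sum>j\<le>n. (branch_weight (j + 1) - branch_weight (j - 1)) * (u_of_z ^ j) $ n)"
    by (simp add: fps_compose_nth atLeast0AtMost branch_gf_u_nth)
  also have "\<dots> = (\<Sum>k = 1..n + 1. branch_weight k * ((u_of_z ^ (k - 1)) $ n - (u_of_z ^ (k + 1)) $ n))"
    using u_of_z_power_nth_above[of n "n + 1"] u_of_z_power_nth_above[of n "n + 2"]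
    by (subst sum_central_difference_by_parts) (simp_all add: branch_weight_def del: power_Suc)
  finally show ?thesis .
qed

theorem corollary1:
  fixes n :: nat
  shows "E n = real (n + 1) / real ((2 * n) choose n) *
    (\<Sum>k = 1..n + 1. (2 - 1 / 2 ^ multiplicity (2::nat) k) * real k *
       (real (binomz (2 * n) (int n + 1 - int k))
        - 2 * real (binomz (2 * n) (int n - int k))
        + real (binomz (2 * n) (int n - 1 - int k))))"
proof -
  let ?D = "\<lambda>k. real (binomz (2 * n) (int n + 1 - int k)) - 2 * real (binomz (2 * n) (int n - int k))
    + real (binomz (2 * n) (int n - 1 - int k))"
  have "E n = (\<Sum>k = 1..n + 1. branch_weight k * ?D k) / real (card (trees n))"
    unfolding E_def trees_def[symmetric] sum_card_branches
    by (intro arg_cong2[of _ _ _ _ "(/)"] sum.cong refl, subst u_of_z_power_diff_nth) auto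
  also have "real (card (trees n)) = real ((2 * n) choose n) / real (n + 1)"
    using card_trees[of n] by (simp add: field_simps)
  also have "(\<Sum>k = 1..n + 1. branch_weight k * ?D k) / (real ((2 * n) choose n) / real (n + 1)) =
      real (n + 1) / real ((2 * n) choose n) * (\<Sum>k = 1..n + 1. branch_weight k * ?D k)"
    by (simp only: divide_divide_eq_right times_divide_eq_left mult.commute)
  finally show ?thesis
    unfolding branch_weight_def .
qed

end
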